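(* For every $\lambda \in \Lambda^{\bullet}(n,r)$, the $\mathbb{C}$-linear span of $B^{\lambda}\setminus \beta^{\lambda}$ is an $\mathbf{S}_0(n,r)$-submodule of $P_\lambda$.
   Context: Let $n,r\ge 0$ be integers. $\Lambda(n,r)$ is the set of weak compositions $\lambda=(\lambda_1,\dots,\lambda_n)$ of $r$ (nonnegative integers summing to $r$), and $\Lambda^{\bullet}(n,r)\subseteq\Lambda(n,r)$ is the set of those $\lambda$ such that $\lambda_i=0$ implies $\lambda_j=0$ for all $j>i$. $M_n(r)$ is the set of $n\times n$ matrices with nonnegative integer entries summing to $r$; for $A=(a_{i,j})\in M_n(r)$, $\mathrm{ro}(A)$ and $\mathrm{co}(A)$ are its row-sum and column-sum vectors. $E_{a,b}$ denotes the $n\times n$ matrix unit, and $D_\lambda=\mathrm{diag}(\lambda_1,\dots,\lambda_n)$. $\mathbf{S}_0(n,r)=S_0(n,r)\otimes_{\mathbb Z}\mathbb{C}$, where $S_0(n,r)=S_q(n,r)\otimes_{\mathbb Z[q]}\mathbb Z[q]/(q)$ is the $0$-Schur algebra, i.e. the specialization at $q=0$ of the Dipper–James $q$-Schur algebra $S_q(n,r)=\mathrm{End}_{H_r(q)}(\bigoplus_{\lambda\in\Lambda(n,r)}x_\lambda H_r(q))$. It has the Jensen–Su standard basis $\{e_A: A\in M_n(r)\}$ with the following properties: - $e_Ae_B=0$ unless $\mathrm{co}(A)=\mathrm{ro}(B)$, in which case $e_Ae_B=e_C$ for a unique $C\in M_n(r)$. - With $k_\lambda:=e_{D_\lambda}$,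 one has $k_\lambda e_A=e_A$ if $\lambda=\mathrm{ro}(A)$ and $0$ otherwise, and $e_Ak_\lambda=e_A$ if $\lambda=\mathrm{co}(A)$ and $0$ otherwise. - For $1\le i\le n-1$, put $e_i=\sum_\lambda e_{D_\lambda-E_{i+1,i+1}+E_{i,i+1}}$ and $f_i=\sum_\lambda e_{D_\lambda-E_{i,i}+E_{i+1,i}}$, the sums running over the $\lambda$ for which these matrices have nonnegative entries. - If $\mathrm{ro}(A)=\lambda$ and $\lambda_{i+1}>0$, then $e_ie_A=e_{A+E_{i,p}-E_{i+1,p}}$, where $p$ is the largest $j$ with $a_{i+1,j}>0$. - If $\lambda_i>0$, then $f_ie_A=e_{A-E_{i,q}+E_{i+1,q}}$, where $q$ is the smallest $j$ with $a_{i,j}>0$. - $e_ie_A=0$ if $\lambda_{i+1}=0$, and $f_ie_A=0$ if $\lambda_i=0$. Construction of $P_\lambda$ (Jensen–Su–Yang). For a strong composition $\alpha=(\alpha_1,\dots,\alpha_s)$ of $n$, cut $\lambda$ into consecutive subsequences of lengths $\alpha_1,\dots,\alpha_s$. We call $\alpha$ maximal with respect to $\lambda$ if each subsequence is either $(0)$ or has neither first nor last entry equal to $0$; $\max(\lambda)$ is the set of such $\alpha$. For an $n\times n$ matrix $A$ and $1\le v\le s$, let $A(\alpha;v)$ be the matrix whose $i$-th column equals that of $A$ if $\alpha_1+\dots+\alpha_{v-1}<i\le \alpha_1+\dots+\alpha_v$, and is zero otherwise. A matrix is open if every $2\times 2$ submatrix has at least one zero on its diagonal (i.e. $a_{i,j}a_{i',j'}=0$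 for all $i<i'$, $j<j'$). $A$ is open on columns with respect to $\alpha$ if every $A(\alpha;v)$ is open. Let $B^{\lambda,\alpha}=\{e_A:\mathrm{co}(A)=\lambda,\ A \text{ open on columns w.r.t. }\alpha\}$ and $$B^\lambda=\{e_A:\mathrm{co}(A)=\lambda\}\setminus\bigcup_{\alpha\in\max(\lambda)\setminus\{(1,\dots,1)\}}B^{\lambda,\alpha}.$$ $P_\lambda$ is the $\mathbb{C}$-span of $B^\lambda$, with action: for $b\in\{e_i,f_i,k_\mu\}$ and $e_A\in B^\lambda$, $b\cdot e_A=e_B$ if $be_A=e_B$ in $S_0(n,r)$ and $e_B\in B^\lambda$, and $b\cdot e_A=0$ otherwise. This is an $\mathbf{S}_0(n,r)$-module, and it is projective indecomposable. A column block diagonal matrix is a matrix $A=(a_{i,j})$ with nonnegative integer entries such that $a_{i,j}>0$ implies $a_{i',s}=0$ for all $i'\le i$ and $s>j$. For $\lambda\in\Lambda^\bullet(n,r)$, $\mathrm{cb}(\lambda)$ is the set of $n\times n$ column block diagonal matrices $A$ with $\mathrm{co}(A)=\lambda$, and $\beta^\lambda=\{e_A:A\in\mathrm{cb}(\lambda)\}$; one has $\beta^\lambda\subseteq B^\lambda$. *)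

theory Defs
  imports Complex_Main
begin

(* n x n matrices with nonnegative integer entries, indexed 1..n (zero outside) *)
type_synonym mat = "nat \<Rightarrow> nat \<Rightarrow> nat"

definition is_mat :: "nat \<Rightarrow> mat \<Rightarrow> bool" where
  "is_mat n A \<longleftrightarrow> (\<forall>i j. (i \<notin> {1..n} \<or> j \<notin> {1..n}) \<longrightarrow> A i j = 0)"

definition ro :: "nat \<Rightarrow> mat \<Rightarrow> (nat \<Rightarrow> nat)" where
  "ro n A = (\<lambda>i. \<Sum>j\<in>{1..n}. A i j)"

definition co :: "nat \<Rightarrow> mat \<Rightarrow> (nat \<Rightarrow> nat)" where
  "co n A = (\<lambda>j. \<Sum>i\<in>{1..n}. A i j)"

definition Lam :: "nat \<Rightarrow> nat \<Rightarrow> (nat \<Rightarrow> nat) set" where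
  "Lam n r = {la. (\<forall>i. i \<notin> {1..n} \<longrightarrow> la i = 0) \<and> (\<Sum>i\<in>{1..n}. la i) = r}"

definition Lam_bullet :: "nat \<Rightarrow> nat \<Rightarrow> (nat \<Rightarrow> nat) set" where
  "Lam_bullet n r = {la \<in> Lam n r. \<forall>i j. 1 \<le> i \<and> i < j \<and> j \<le> n \<and> la i = 0 \<longrightarrow> la j = 0}"

definition open_mat :: "mat \<Rightarrow> bool" where
  "open_mat A \<longleftrightarrow> (\<forall>i i' j j'. i < i' \<and> j < j' \<longrightarrow> A i j * A i' j' = 0)"

definition strong_comp :: "nat \<Rightarrow> nat list \<Rightarrow> bool" where
  "strong_comp n \<alpha> \<longleftrightarrow> (\<forall>a\<in>set \<alpha>. 0 < a) \<and> sum_list \<alpha> = n"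

(* the v-th block (1 <= v <= length alpha) of positions *)
definition block :: "nat list \<Rightarrow> nat \<Rightarrow> nat set" where
  "block \<alpha> v = {sum_list (take (v - 1) \<alpha>) + 1 .. sum_list (take v \<alpha>)}"

definition maximal_wrt :: "nat \<Rightarrow> (nat \<Rightarrow> nat) \<Rightarrow> nat list \<Rightarrow> bool" where
  "maximal_wrt n la \<alpha> \<longleftrightarrow> strong_comp n \<alpha> \<and>
     (\<forall>v\<in>{1..length \<alpha>}.
        (\<alpha> ! (v - 1) = 1 \<and> la (sum_list (take v \<alpha>)) = 0) \<or>
        (la (sum_list (take (v - 1) \<alpha>) + 1) \<noteq> 0 \<and> la (sum_list (take v \<alpha>)) \<noteq> 0))"

definition col_part :: "nat list \<Rightarrow> nat \<Rightarrow> mat \<Rightarrow> mat" where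
  "col_part \<alpha> v A = (\<lambda>a b. if b \<in> block \<alpha> v then A a b else 0)"

definition open_on_cols :: "nat list \<Rightarrow> mat \<Rightarrow> bool" where
  "open_on_cols \<alpha> A \<longleftrightarrow> (\<forall>v\<in>{1..length \<alpha>}. open_mat (col_part \<alpha> v A))"

(* B^{lambda,alpha} (as a set of matrices A, standing for e_A) *)
definition Bla_al :: "nat \<Rightarrow> (nat \<Rightarrow> nat) \<Rightarrow> nat list \<Rightarrow> mat set" where
  "Bla_al n la \<alpha> = {A. is_mat n A \<and> co n A = la \<and> open_on_cols \<alpha> A}"

definition Bla :: "nat \<Rightarrow> (nat \<Rightarrow> nat) \<Rightarrow> mat set" where
  "Bla n la = {A. is_mat n A \<and> co n A = la} -
     (\<Union>\<alpha>\<in>{\<alpha>. maximal_wrt n la \<alpha> \<and> \<alpha> \<noteq> replicate n 1}. Bla_al n la \<alpha>)"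

definition col_block_diag :: "mat \<Rightarrow> bool" where
  "col_block_diag A \<longleftrightarrow> (\<forall>i j. 0 < A i j \<longrightarrow> (\<forall>i' s. i' \<le> i \<and> j < s \<longrightarrow> A i' s = 0))"

definition cb :: "nat \<Rightarrow> (nat \<Rightarrow> nat) \<Rightarrow> mat set" where
  "cb n la = {A. is_mat n A \<and> co n A = la \<and> col_block_diag A}"

datatype gen = GE nat | GF nat | GK "nat \<Rightarrow> nat"

definition valid_gen :: "nat \<Rightarrow> nat \<Rightarrow> gen \<Rightarrow> bool" where
  "valid_gen n r g = (case g of GE i \<Rightarrow> 1 \<le> i \<and> i \<le> n - 1
                          | GF i \<Rightarrow> 1 \<le> i \<and> i \<le> n - 1
                          | GK mu \<Rightarrow> mu \<in> Lam n r)"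

definition add_unit :: "mat \<Rightarrow> nat \<Rightarrow> nat \<Rightarrow> mat" where
  "add_unit A a b = (\<lambda>x y. if x = a \<and> y = b then A x y + 1 else A x y)"

definition sub_unit :: "mat \<Rightarrow> nat \<Rightarrow> nat \<Rightarrow> mat" where
  "sub_unit A a b = (\<lambda>x y. if x = a \<and> y = b then A x y - 1 else A x y)"

(* product g * e_A in S_0(n,r): Some C means g e_A = e_C, None means 0 *)
definition gen_mult :: "nat \<Rightarrow> gen \<Rightarrow> mat \<Rightarrow> mat option" where
  "gen_mult n g A = (case g of
      GE i \<Rightarrow> if 0 < ro n A (i + 1)
              then (let p = Max {j\<in>{1..n}. 0 < A (i + 1) j}
                    in Some (sub_unit (add_unit A i p) (i + 1) p))
              else None
    | GF i \<Rightarrow> if 0 < ro n A i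
              then (let q = Min {j\<in>{1..n}. 0 < A i j}
                    in Some (add_unit (sub_unit A i q) (i + 1) q))
              else None
    | GK mu \<Rightarrow> if mu = ro n A then Some A else None)"

(* elements of P_lambda: complex coefficient functions on matrices (supported in B^lambda) *)
type_synonym vec = "mat \<Rightarrow> complex"

(* g . e_A in P_lambda on basis elements *)
definition P_step :: "nat \<Rightarrow> (nat \<Rightarrow> nat) \<Rightarrow> gen \<Rightarrow> mat \<Rightarrow> mat option" where
  "P_step n la g A = (case gen_mult n g A of
       Some B \<Rightarrow> if B \<in> Bla n la then Some B else None
     | None \<Rightarrow> None)"

definition P_act :: "nat \<Rightarrow> (nat \<Rightarrow> nat) \<Rightarrow> gen \<Rightarrow> vec \<Rightarrow> vec" where
  "P_act n la g v = (\<lambda>C. \<Sum>A\<in>{A\<in>Bla n la. P_step n la g A = Some C}. v A)"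

(* C-linear span of a (finite) set S of basis vectors e_A *)
definition span_basis :: "mat set \<Rightarrow> vec set" where
  "span_basis S = {v. \<forall>A. A \<notin> S \<longrightarrow> v A = 0}"

definition P_module :: "nat \<Rightarrow> (nat \<Rightarrow> nat) \<Rightarrow> vec set" where
  "P_module n la = span_basis (Bla n la)"

definition is_submodule :: "nat \<Rightarrow> nat \<Rightarrow> (nat \<Rightarrow> nat) \<Rightarrow> vec set \<Rightarrow> bool" where
  "is_submodule n r la W \<longleftrightarrow> W \<subseteq> P_module n la \<and> (\<lambda>A. 0) \<in> W \<and>
     (\<forall>v\<in>W. \<forall>w\<in>W. (\<lambda>A. v A + w A) \<in> W) \<and> (\<forall>c. \<forall>v\<in>W. (\<lambda>A. c * v A) \<in> W) \<and>
     (\<forall>g. valid_gen n r g \<longrightarrow> (\<forall>v\<in>W. P_act n la g v \<in> W))"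

end

theory Submission
  imports Defs
begin

text \<open>
  The generators act on the basis of \<open>P\<^sub>\<lambda>\<close> by maps between basis elements, so
  the span of a set of basis elements is a submodule as soon as that set is closed under these
  maps. For \<open>B\<^sup>\<lambda> - \<beta>\<^sup>\<lambda>\<close> this means: if \<open>e\<^sub>i e\<^sub>A\<close> or \<open>f\<^sub>i e\<^sub>A\<close> is column block
  diagonal, then so is \<open>A\<close>. Both operations move one unit within a single column \<open>b\<close> of \<open>A\<close>,
  from the row \<open>a\<close> to an adjacent row \<open>c\<close>, and the choice of \<open>b\<close> as the last (resp. first)
  nonzero column of row \<open>a\<close> ensures that every pair of entries of \<open>A\<close> violating column block
  diagonality survives in the new matrix, with \<open>(c, b)\<close> in place of \<open>(a, b)\<close>.
\<close>

lemma col_block_diag_iff: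
  "col_block_diag A \<longleftrightarrow> \<not> (\<exists>x y x' s. 0 < A x y \<and> x' \<le> x \<and> y < s \<and> 0 < A x' s)"
  unfolding col_block_diag_def by (metis not_gr0)

lemma col_block_diag_reflect_unit_move:
  assumes dom: "\<And>x y. (x, y) \<noteq> (a, b) \<Longrightarrow> A x y \<le> C x y"
    and target: "0 < C c b"
    and above: "\<And>x s. 0 < A x s \<Longrightarrow> x \<le> a \<Longrightarrow> b < s \<Longrightarrow> x \<le> c"
    and below: "\<And>x y. 0 < A x y \<Longrightarrow> a \<le> x \<Longrightarrow> y < b \<Longrightarrow> c \<le> x"
    and "col_block_diag C"
  shows "col_block_diag A"
proof (rule ccontr)
  have no_violation: "\<not> (0 < C x y \<and> x' \<le> x \<and> y < s \<and> 0 < C x' s)" for x y x' s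
    using \<open>col_block_diag C\<close> unfolding col_block_diag_iff by blast
  have persists: "0 < C x y" if "0 < A x y" "(x, y) \<noteq> (a, b)" for x y
    using dom[OF that(2)] that(1) by simp
  assume "\<not> col_block_diag A"
  then obtain x y x' s where viol: "0 < A x y" "x' \<le> x" "y < s" "0 < A x' s"
    unfolding col_block_diag_iff by blast
  consider "(x, y) = (a, b)" | "(x', s) = (a, b)" | "(x, y) \<noteq> (a, b)" "(x', s) \<noteq> (a, b)"
    by blast
  then show False
  proof cases
    case 1
    then have "x' \<le> c" "(x', s) \<noteq> (a, b)" using above[OF viol(4)] viol by auto
    then show False using no_violation[of c b x' s] target persists[OF viol(4)] viol 1 by auto
  next
    case 2
    then have "c \<le> x" "(x, y) \<noteq> (a, b)" using below[OF viol(1)] viol by auto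
    then show False using no_violation[of x y c b] target persists[OF viol(1)] viol 2 by auto
  qed (use no_violation[of x y x' s] persists viol in auto)
qed

lemma is_mat_pos_in_range:
  assumes "is_mat n A" "0 < A i j" shows "j \<in> {1..n}"
  using assms unfolding is_mat_def by (metis not_gr0)

lemma gen_mult_reflects_col_block_diag:
  assumes "is_mat n A" "gen_mult n g A = Some C" "col_block_diag C"
  shows "col_block_diag A"
proof (cases g)
  case (GE i)
  define p where "p = Max {j\<in>{1..n}. 0 < A (i + 1) j}"
  have C: "C = sub_unit (add_unit A i p) (i + 1) p"
    using assms(2) GE unfolding gen_mult_def p_def Let_def by (auto split: if_splits)
  have p_max: "s \<le> p" if "0 < A (i + 1) s" for s
    using that is_mat_pos_in_range[OF assms(1)] unfolding p_def by (auto intro: Max_ge)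
  show ?thesis
  proof (rule col_block_diag_reflect_unit_move[where a = "i + 1" and b = p and c = i])
    show "0 < C i p" unfolding C sub_unit_def add_unit_def by simp
    show "x \<le> i" if "0 < A x s" "x \<le> i + 1" "p < s" for x s
      using p_max[of s] that by (cases "x = i + 1") auto
  qed (use assms(3) in \<open>auto simp: C sub_unit_def add_unit_def\<close>)
next
  case (GF i)
  define q where "q = Min {j\<in>{1..n}. 0 < A i j}"
  have C: "C = add_unit (sub_unit A i q) (i + 1) q"
    using assms(2) GF unfolding gen_mult_def q_def Let_def by (auto split: if_splits)
  have q_min: "q \<le> y" if "0 < A i y" for y
    using that is_mat_pos_in_range[OF assms(1)] unfolding q_def by (auto intro: Min_le)
  show ?thesis
  proof (rule col_block_diag_reflect_unit_move[where a = i and b = q and c = "i + 1"])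
    show "0 < C (i + 1) q" unfolding C sub_unit_def add_unit_def by simp
    show "i + 1 \<le> x" if "0 < A x y" "i \<le> x" "y < q" for x y
      using q_min[of y] that by (cases "x = i") auto
  qed (use assms(3) in \<open>auto simp: C sub_unit_def add_unit_def\<close>)
next
  case (GK mu)
  then show ?thesis using assms(2,3) unfolding gen_mult_def by (auto split: if_splits)
qed

lemma P_step_in_Bla:
  "P_step n la g A = Some C \<Longrightarrow> C \<in> Bla n la"
  unfolding P_step_def by (auto split: option.splits if_splits)

lemma P_step_reflects_cb:
  assumes "P_step n la g A = Some C" "A \<in> Bla n la" "C \<in> cb n la"
  shows "A \<in> cb n la"
proof -
  have "gen_mult n g A = Some C"
    using assms(1) unfolding P_step_def by (auto split: option.splits if_splits)
  moreover have "is_mat n A" "co n A = la" using assms(2) unfolding Bla_def by auto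
  ultimately show ?thesis
    using gen_mult_reflects_col_block_diag assms(3) unfolding cb_def by auto
qed

lemma P_act_span_basis:
  assumes closed: "\<And>A C. A \<in> S \<Longrightarrow> P_step n la g A = Some C \<Longrightarrow> C \<in> S"
    and "v \<in> span_basis S"
  shows "P_act n la g v \<in> span_basis S"
proof -
  have "P_act n la g v C = 0" if "C \<notin> S" for C
  proof -
    have "v A = 0" if "P_step n la g A = Some C" for A
      using closed[OF _ that] \<open>C \<notin> S\<close> \<open>v \<in> span_basis S\<close> unfolding span_basis_def by blast
    then show ?thesis unfolding P_act_def by simp
  qed
  then show ?thesis unfolding span_basis_def by blast
qed

lemma is_submodule_span_basis:
  assumes "S \<subseteq> Bla n la"
    and closed: "\<And>g A C. A \<in> S \<Longrightarrow> P_step n la g A = Some C \<Longrightarrow> C \<in> S"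
  shows "is_submodule n r la (span_basis S)"
  using assms(1) P_act_span_basis[OF closed]
  unfolding is_submodule_def P_module_def span_basis_def by auto

theorem mainTheorem1:
  fixes n r :: nat and la :: "nat \<Rightarrow> nat"
  assumes "la \<in> Lam_bullet n r"
  shows "is_submodule n r la (span_basis (Bla n la - cb n la))"
proof (rule is_submodule_span_basis)
  fix g A C
  assume "A \<in> Bla n la - cb n la" "P_step n la g A = Some C"
  then show "C \<in> Bla n la - cb n la"
    using P_step_in_Bla P_step_reflects_cb by blast
qed blast

end
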